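(* Let $\Omega$ be a non-empty bounded open subset of $\mathbf{R}^2$, let $h:\Omega\to\mathbf{R}$ be continuous, and let $\alpha,\beta:\Omega\to\mathbf{R}$ be $C^1$ functions such that $|\alpha_x\beta_y-\alpha_y\beta_x|+|h|>0$ and $(\alpha_x\beta_y-\alpha_y\beta_x)h\ge0$ in $\Omega$. Then any $C^1$ solution $(u,v):\Omega\to\mathbf{R}^2$ in $\Omega$ of the system $$u_xv_y-u_yv_x=h,\qquad \beta_yu_x-\beta_xu_y-\alpha_yv_x+\alpha_xv_y=0$$ satisfies the convex hull-like property in $\Omega$.
   Context: A function $\psi:\mathbf{R}^2\to\mathbf{R}$ is quasi-convex if for each $r\in\mathbf{R}$ the set $\psi^{-1}(]-\infty,r])$ is convex. A continuous function $f:\Omega\to\mathbf{R}^2$ satisfies the convex hull-like property in $\Omega$ if for every continuous quasi-convex $\psi:\mathbf{R}^2\to\mathbf{R}$ there exists $x^*\in\partial\Omega$ such that $\limsup_{x\to x^*,\,x\in\Omega}\psi(f(x))=\sup_{x\in\Omega}\psi(f(x))$. *)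

theory Defs
  imports "HOL-Analysis.Analysis" "HOL-Library.Extended_Real" "HOL-Library.Liminf_Limsup"
begin

definition C1_with_partials ::
  "(real \<times> real) set \<Rightarrow> (real \<times> real \<Rightarrow> real) \<Rightarrow> (real \<times> real \<Rightarrow> real) \<Rightarrow> (real \<times> real \<Rightarrow> real) \<Rightarrow> bool"
where
  "C1_with_partials S f fx fy \<longleftrightarrow>
     (\<forall>p\<in>S. (f has_derivative (\<lambda>(dx, dy). fx p * dx + fy p * dy)) (at p)) \<and>
     continuous_on S fx \<and> continuous_on S fy"

definition quasi_convex :: "(real \<times> real \<Rightarrow> real) \<Rightarrow> bool" where
  "quasi_convex \<psi> \<longleftrightarrow> (\<forall>r. convex {z. \<psi> z \<le> r})"

definition convex_hull_like ::
  "(real \<times> real) set \<Rightarrow> (real \<times> real \<Rightarrow> real \<times> real) \<Rightarrow> bool" where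
  "convex_hull_like \<Omega> f \<longleftrightarrow>
     (\<forall>\<psi>. continuous_on UNIV \<psi> \<and> quasi_convex \<psi> \<longrightarrow>
        (\<exists>xs\<in>frontier \<Omega>.
           Limsup (at xs within \<Omega>) (\<lambda>x. ereal (\<psi> (f x))) = (SUP x\<in>\<Omega>. ereal (\<psi> (f x)))))"

end

theory Submission
  imports Defs
begin

text \<open>
For \<open>t \<noteq> 0\<close> the perturbed map \<open>F\<^sub>t = (u, v) + t (\<alpha>, \<beta>)\<close> has Jacobian \<open>h + t\<^sup>2 J\<close>, where
\<open>J = \<alpha>\<^sub>x\<beta>\<^sub>y - \<alpha>\<^sub>y\<beta>\<^sub>x\<close>: the second equation of the system kills the term linear in \<open>t\<close>.
The sign conditions make this Jacobian nonzero, so \<open>F\<^sub>t\<close> is an open map.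
A continuous quasi-convex \<open>\<psi>\<close> attains its maximum over a compact plane set at a
non-interior point of it (push a farthest maximiser away from a lower point and use
convexity of the sublevel set), so \<open>\<psi> \<circ> F\<^sub>t\<close> attains its maximum over a compact
\<open>C \<subseteq> \<Omega>\<close> on the boundary of \<open>C\<close>, and letting \<open>t \<rightarrow> 0\<close> the same bound holds for \<open>\<psi> \<circ> (u, v)\<close>.
If the convex hull-like property failed for \<open>\<psi>\<close>, then by compactness of \<open>\<partial>\<Omega>\<close> the
function \<open>\<psi> \<circ> (u, v)\<close> would stay below some \<open>m < sup\<close> near \<open>\<partial>\<Omega>\<close>, which yields a compact
\<open>C \<subseteq> \<Omega>\<close> with boundary values below \<open>m\<close> and a point of \<open>C\<close> where the value exceeds \<open>m\<close>.
\<close>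

lemma C1_with_partials_has_derivative:
  "C1_with_partials S f fx fy \<Longrightarrow> p \<in> S \<Longrightarrow>
    (f has_derivative (\<lambda>(dx, dy). fx p * dx + fy p * dy)) (at p)"
  by (simp add: C1_with_partials_def)

lemma C1_with_partials_continuous_on:
  assumes "C1_with_partials S f fx fy"
  shows "continuous_on S f"
  using assms has_derivative_continuous unfolding C1_with_partials_def
  by (blast intro: continuous_at_imp_continuous_on)

lemma C1_with_partials_add_scaled:
  assumes f: "C1_with_partials S f fx fy" and g: "C1_with_partials S g gx gy"
  shows "C1_with_partials S (\<lambda>p. f p + t * g p) (\<lambda>p. fx p + t * gx p) (\<lambda>p. fy p + t * gy p)"
  unfolding C1_with_partials_def
proof (intro conjI ballI)
  fix p assume "p \<in> S"
  show "((\<lambda>p. f p + t * g p) has_derivative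
      (\<lambda>(dx, dy). (fx p + t * gx p) * dx + (fy p + t * gy p) * dy)) (at p)"
    by (rule has_derivative_eq_rhs,
        rule has_derivative_add[OF C1_with_partials_has_derivative[OF f \<open>p \<in> S\<close>]
          has_derivative_mult_right[OF C1_with_partials_has_derivative[OF g \<open>p \<in> S\<close>]]])
      (auto simp: algebra_simps)
next
  show "continuous_on S (\<lambda>p. fx p + t * gx p)" "continuous_on S (\<lambda>p. fy p + t * gy p)"
    using f g unfolding C1_with_partials_def by (auto intro!: continuous_intros)
qed

lemma bounded_linear_right_inverse_2x2:
  fixes a b c d :: real
  assumes det: "a * d - b * c \<noteq> 0"
  obtains g where "bounded_linear g" "(\<lambda>(x, y). (a * x + b * y, c * x + d * y)) \<circ> g = id"
proof -
  let ?f = "\<lambda>(x, y). (a * x + b * y, c * x + d * y)"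
  have lin: "linear ?f"
    by (rule linearI) (auto simp: algebra_simps)
  have "inj ?f"
    unfolding linear_injective_0[OF lin]
  proof (clarsimp simp: zero_prod_def)
    fix x y :: real
    assume xy: "a * x + b * y = 0" "c * x + d * y = 0"
    have "(a * d - b * c) * x = d * (a * x + b * y) - b * (c * x + d * y)"
      and "(a * d - b * c) * y = a * (c * x + d * y) - c * (a * x + b * y)"
      by algebra+
    then have "(a * d - b * c) * x = 0" "(a * d - b * c) * y = 0"
      by (simp_all add: xy)
    then show "x = 0 \<and> y = 0" using det by simp
  qed
  then obtain g where "linear g" "?f \<circ> g = id"
    using real_vector.linear_surjective_right_inverse[OF lin eucl.linear_inj_imp_surj[OF lin]] by blast
  then show ?thesis using that linear_conv_bounded_linear by blast
qed

lemma open_mapping_nonzero_jacobian: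
  assumes "open S"
    and f: "C1_with_partials S f fx fy" and g: "C1_with_partials S g gx gy"
    and jacobian: "\<forall>p\<in>S. fx p * gy p - fy p * gx p \<noteq> 0"
    and "T \<subseteq> S" "y \<in> interior T"
  shows "(f y, g y) \<in> interior ((\<lambda>p. (f p, g p)) ` T)"
proof -
  have "y \<in> S" using assms(5,6) interior_subset by blast
  have cont: "continuous_on S (\<lambda>p. (f p, g p))"
    using C1_with_partials_continuous_on[OF f] C1_with_partials_continuous_on[OF g]
    by (intro continuous_intros)
  have deriv: "((\<lambda>p. (f p, g p)) has_derivative
      (\<lambda>(dx, dy). (fx y * dx + fy y * dy, gx y * dx + gy y * dy))) (at y)"
    using has_derivative_Pair[OF C1_with_partials_has_derivative[OF f \<open>y \<in> S\<close>]
        C1_with_partials_has_derivative[OF g \<open>y \<in> S\<close>]]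
    by (simp add: split_def)
  obtain g' where "bounded_linear g'"
      "(\<lambda>(dx, dy). (fx y * dx + fy y * dy, gx y * dx + gy y * dy)) \<circ> g' = id"
    using bounded_linear_right_inverse_2x2 jacobian \<open>y \<in> S\<close> by blast
  then show ?thesis
    using sussmann_open_mapping[OF \<open>open S\<close> cont \<open>y \<in> S\<close> deriv] assms(5,6) by blast
qed

lemma perturbed_jacobian_nonzero:
  fixes ux uy vx vy \<alpha>x \<alpha>y \<beta>x \<beta>y h t :: real
  assumes "ux * vy - uy * vx = h"
    and "\<beta>y * ux - \<beta>x * uy - \<alpha>y * vx + \<alpha>x * vy = 0"
    and "\<bar>\<alpha>x * \<beta>y - \<alpha>y * \<beta>x\<bar> + \<bar>h\<bar> > 0"
    and "(\<alpha>x * \<beta>y - \<alpha>y * \<beta>x) * h \<ge> 0"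
    and "t \<noteq> 0"
  shows "(ux + t * \<alpha>x) * (vy + t * \<beta>y) - (uy + t * \<alpha>y) * (vx + t * \<beta>x) \<noteq> 0"
proof -
  define J where "J = \<alpha>x * \<beta>y - \<alpha>y * \<beta>x"
  have "(ux + t * \<alpha>x) * (vy + t * \<beta>y) - (uy + t * \<alpha>y) * (vx + t * \<beta>x)
      = (ux * vy - uy * vx) + t * (\<beta>y * ux - \<beta>x * uy - \<alpha>y * vx + \<alpha>x * vy) + t\<^sup>2 * J"
    unfolding J_def by (simp add: algebra_simps power2_eq_square)
  also have "\<dots> = h + t\<^sup>2 * J"
    using assms(1,2) by simp
  finally have det: "(ux + t * \<alpha>x) * (vy + t * \<beta>y) - (uy + t * \<alpha>y) * (vx + t * \<beta>x) = h + t\<^sup>2 * J" .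
  show ?thesis
  proof (cases "J = 0")
    case True
    then show ?thesis using det assms(3) J_def by simp
  next
    case False
    have "J * h \<ge> 0" unfolding J_def using assms(4) .
    moreover have "(t * J)\<^sup>2 > 0" using False assms(5) by simp
    moreover have "J * (h + t\<^sup>2 * J) = J * h + (t * J)\<^sup>2"
      by (simp add: algebra_simps power2_eq_square)
    ultimately have "J * (h + t\<^sup>2 * J) > 0" by linarith
    then show ?thesis using det by auto
  qed
qed

lemma quasi_convex_le_max:
  assumes "quasi_convex \<psi>" "0 \<le> l" "l \<le> 1"
  shows "\<psi> ((1 - l) *\<^sub>R x + l *\<^sub>R y) \<le> max (\<psi> x) (\<psi> y)"
proof -
  have "convex {z. \<psi> z \<le> max (\<psi> x) (\<psi> y)}"
    using assms(1) unfolding quasi_convex_def by blast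
  then show ?thesis
    using assms(2,3) by (auto dest: convexD[of _ x y "1 - l" l])
qed

lemma quasi_convex_farthest_maximiser_not_interior:
  fixes \<psi> :: "real \<times> real \<Rightarrow> real"
  assumes "quasi_convex \<psi>" "\<forall>z\<in>T. \<psi> z \<le> L" "\<psi> q < L" "\<psi> zs = L"
    and farthest: "\<forall>z\<in>T. \<psi> z = L \<longrightarrow> dist q z \<le> dist q zs"
  shows "zs \<notin> interior T"
proof
  assume "zs \<in> interior T"
  then obtain r where "r > 0" "ball zs r \<subseteq> T" using mem_interior by blast
  define d where "d = dist q zs"
  have "d > 0" using assms(3,4) unfolding d_def by auto
  define s where "s = r / (2 * d)"
  define z' where "z' = zs + s *\<^sub>R (zs - q)"
  have "s > 0" using \<open>r > 0\<close> \<open>d > 0\<close> unfolding s_def by simp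
  have norm_zs: "norm (zs - q) = d" unfolding d_def by (simp add: dist_norm norm_minus_commute)
  have "dist zs z' = r / 2"
    using \<open>r > 0\<close> \<open>d > 0\<close> unfolding z'_def s_def by (simp add: dist_norm norm_zs)
  then have "z' \<in> T" using \<open>r > 0\<close> \<open>ball zs r \<subseteq> T\<close> by auto
  have "z' - q = (1 + s) *\<^sub>R (zs - q)" by (simp add: z'_def algebra_simps)
  then have "dist q z' = (1 + s) * d"
    using \<open>s > 0\<close> by (simp add: dist_norm norm_minus_commute[of q] norm_zs)
  then have "\<psi> z' \<noteq> L" using farthest \<open>z' \<in> T\<close> \<open>s > 0\<close> \<open>d > 0\<close> unfolding d_def by force
  then have "\<psi> z' < L" using assms(2) \<open>z' \<in> T\<close> by force
  define l where "l = 1 / (1 + s)"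
  have "l * (1 + s) = 1" using \<open>s > 0\<close> unfolding l_def by simp
  have "(1 - l) *\<^sub>R q + l *\<^sub>R z' = (1 - l * (1 + s)) *\<^sub>R q + (l * (1 + s)) *\<^sub>R zs"
    by (simp add: z'_def algebra_simps)
  then have "zs = (1 - l) *\<^sub>R q + l *\<^sub>R z'"
    using \<open>l * (1 + s) = 1\<close> by simp
  moreover have "0 \<le> l" "l \<le> 1" using \<open>s > 0\<close> unfolding l_def by simp_all
  ultimately have "\<psi> zs \<le> max (\<psi> q) (\<psi> z')"
    using quasi_convex_le_max[OF assms(1)] by metis
  then show False using assms(3,4) \<open>\<psi> z' < L\<close> by auto
qed

lemma quasi_convex_attains_max_off_interior:
  fixes \<psi> :: "real \<times> real \<Rightarrow> real"
  assumes "compact T" "T \<noteq> {}" "continuous_on T \<psi>" "quasi_convex \<psi>"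
  obtains z where "z \<in> T" "z \<notin> interior T" "\<forall>y\<in>T. \<psi> y \<le> \<psi> z"
proof -
  obtain zm where zm: "zm \<in> T" "\<forall>y\<in>T. \<psi> y \<le> \<psi> zm"
    using continuous_attains_sup[OF assms(1-3)] by blast
  show ?thesis
  proof (cases "\<exists>q\<in>T. \<psi> q < \<psi> zm")
    case False
    have "T \<noteq> UNIV" using compact_imp_bounded[OF assms(1)] not_bounded_UNIV by auto
    then obtain z where "z \<in> frontier T"
      using frontier_not_empty[OF assms(2)] by blast
    moreover have "frontier T \<subseteq> T"
      using frontier_subset_closed compact_imp_closed[OF assms(1)] by blast
    ultimately show ?thesis
      using that[of z] False zm unfolding frontier_def by force
  next
    case True
    then obtain q where q: "q \<in> T" "\<psi> q < \<psi> zm" by blast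
    define E where "E = {z \<in> T. \<psi> z = \<psi> zm}"
    have "closed E"
      unfolding E_def
      by (rule continuous_closed_preimage_constant[OF assms(3) compact_imp_closed[OF assms(1)]])
    then have "compact E"
      using compact_Int_closed[OF assms(1)] by (metis E_def Int_absorb1 mem_Collect_eq subsetI)
    moreover have "zm \<in> E" using zm unfolding E_def by simp
    ultimately obtain zs where zs: "zs \<in> E" "\<forall>z\<in>E. dist q z \<le> dist q zs"
      using continuous_attains_sup[of E "dist q"]
        continuous_on_dist[OF continuous_on_const continuous_on_id]
      by blast
    have "zs \<notin> interior T"
      by (rule quasi_convex_farthest_maximiser_not_interior[OF assms(4) zm(2) q(2)])
        (use zs in \<open>auto simp: E_def\<close>)
    then show ?thesis using that[of zs] zs(1) zm(2) unfolding E_def by simp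
  qed
qed

lemma quasi_convex_maximum_principle:
  fixes F :: "'a::topological_space \<Rightarrow> real \<times> real"
  assumes "compact C" "continuous_on C F"
    and open_map: "\<forall>y\<in>interior C. F y \<in> interior (F ` C)"
    and "continuous_on UNIV \<psi>" "quasi_convex \<psi>" "x \<in> C"
  obtains y where "y \<in> C" "y \<notin> interior C" "\<psi> (F x) \<le> \<psi> (F y)"
proof -
  obtain z where z: "z \<in> F ` C" "z \<notin> interior (F ` C)" "\<forall>w\<in>F ` C. \<psi> w \<le> \<psi> z"
    using quasi_convex_attains_max_off_interior[of "F ` C" \<psi>] assms
      compact_continuous_image continuous_on_subset by blast
  then obtain y where "y \<in> C" "z = F y" by blast
  then show ?thesis using that[of y] open_map z \<open>x \<in> C\<close> by blast
qed

lemma uniformly_small_perturbation: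
  fixes \<psi> :: "'b::{real_normed_vector,heine_borel} \<Rightarrow> real"
  assumes "continuous_on UNIV \<psi>" "compact (p ` C)" "bounded (w ` C)" "e > 0"
  obtains t where "t > 0" "\<forall>x\<in>C. \<bar>\<psi> (p x + t *\<^sub>R w x) - \<psi> (p x)\<bar> < e"
proof -
  define N where "N = {a + b | a b. a \<in> p ` C \<and> b \<in> cball 0 1}"
  have "compact N" unfolding N_def by (rule compact_sums[OF assms(2) compact_cball])
  then have "uniformly_continuous_on N \<psi>"
    using compact_uniformly_continuous continuous_on_subset[OF assms(1)] by blast
  then obtain \<rho> where "\<rho> > 0" and \<rho>: "\<forall>a\<in>N. \<forall>b\<in>N. dist b a < \<rho> \<longrightarrow> dist (\<psi> b) (\<psi> a) < e"
    unfolding uniformly_continuous_on_def using assms(4) by blast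
  obtain B where "B > 0" and B: "\<forall>x\<in>C. norm (w x) \<le> B"
    using assms(3) unfolding bounded_pos by blast
  define t where "t = min 1 \<rho> / (2 * B)"
  have "t > 0" using \<open>\<rho> > 0\<close> \<open>B > 0\<close> unfolding t_def by simp
  moreover have "\<bar>\<psi> (p x + t *\<^sub>R w x) - \<psi> (p x)\<bar> < e" if "x \<in> C" for x
  proof -
    have "norm (t *\<^sub>R w x) \<le> t * B"
      using B that \<open>t > 0\<close> by (simp add: mult_left_mono)
    also have "\<dots> = min 1 \<rho> / 2" using \<open>B > 0\<close> unfolding t_def by simp
    finally have small: "norm (t *\<^sub>R w x) \<le> min 1 \<rho> / 2" .
    have "p x \<in> N" unfolding N_def using that by force
    moreover have "p x + t *\<^sub>R w x \<in> N" unfolding N_def using that small by force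
    moreover have "dist (p x + t *\<^sub>R w x) (p x) < \<rho>"
      using small \<open>\<rho> > 0\<close> by (simp add: dist_norm)
    ultimately show ?thesis using \<rho> by (simp add: dist_real_def)
  qed
  ultimately show ?thesis using that by blast
qed

lemma Limsup_less_imp_ball_bound:
  fixes g :: "'a::metric_space \<Rightarrow> real"
  assumes "x \<notin> A" "Limsup (at x within A) (\<lambda>y. ereal (g y)) < S"
  shows "\<exists>m d. ereal m < S \<and> d > 0 \<and> (\<forall>y\<in>A. dist y x < d \<longrightarrow> g y < m)"
proof -
  obtain m where m: "Limsup (at x within A) (\<lambda>y. ereal (g y)) < ereal m" "ereal m < S"
    using ereal_dense2[OF assms(2)] by blast
  have "eventually (\<lambda>y. ereal (g y) < ereal m) (at x within A)"
    using Limsup_lessD[OF m(1)] .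
  then obtain d where "d > 0"
    and d: "\<forall>y\<in>A. y \<noteq> x \<and> dist y x < d \<longrightarrow> ereal (g y) < ereal m"
    unfolding eventually_at by blast
  have "\<forall>y\<in>A. dist y x < d \<longrightarrow> g y < m"
  proof (intro ballI impI)
    fix y assume "y \<in> A" "dist y x < d"
    moreover from \<open>y \<in> A\<close> \<open>x \<notin> A\<close> have "y \<noteq> x" by blast
    ultimately show "g y < m" using d by simp
  qed
  then show ?thesis using m(2) \<open>d > 0\<close> by blast
qed

lemma Limsup_less_imp_bound_near_compact:
  fixes g :: "'a::metric_space \<Rightarrow> real"
  assumes "compact K" "K \<noteq> {}" "K \<inter> A = {}"
    and "\<forall>x\<in>K. Limsup (at x within A) (\<lambda>y. ereal (g y)) < S"
  obtains m G where "ereal m < S" "open G" "K \<subseteq> G" "\<forall>y\<in>A \<inter> G. g y < m"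
proof -
  have bounds: "\<forall>x\<in>K. \<exists>m d. ereal m < S \<and> d > 0 \<and> (\<forall>y\<in>A. dist y x < d \<longrightarrow> g y < m)"
  proof
    fix x assume "x \<in> K"
    then show "\<exists>m d. ereal m < S \<and> d > 0 \<and> (\<forall>y\<in>A. dist y x < d \<longrightarrow> g y < m)"
      using Limsup_less_imp_ball_bound[of x A g S] assms(3,4) by blast
  qed
  then obtain M
    where M: "\<forall>x\<in>K. \<exists>d. ereal (M x) < S \<and> d > 0 \<and> (\<forall>y\<in>A. dist y x < d \<longrightarrow> g y < M x)"
    using bchoice[OF bounds] by blast
  then obtain D
    where MD: "\<forall>x\<in>K. ereal (M x) < S \<and> D x > 0 \<and> (\<forall>y\<in>A. dist y x < D x \<longrightarrow> g y < M x)"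
    using bchoice[OF M] by blast
  have cover: "K \<subseteq> (\<Union>x\<in>K. ball x (D x))"
  proof
    fix x assume "x \<in> K"
    then have "x \<in> ball x (D x)" using MD by simp
    then show "x \<in> (\<Union>x\<in>K. ball x (D x))" using \<open>x \<in> K\<close> by blast
  qed
  obtain K' where K': "K' \<subseteq> K" "finite K'" "K \<subseteq> (\<Union>x\<in>K'. ball x (D x))"
    by (rule compactE_image[OF assms(1) open_ball cover])
  have "K' \<noteq> {}" using K'(3) assms(2) by blast
  show ?thesis
  proof (rule that[of "Max (M ` K')" "\<Union>x\<in>K'. ball x (D x)"])
    have "Max (M ` K') \<in> M ` K'" using K'(2) \<open>K' \<noteq> {}\<close> by simp
    then obtain x where "x \<in> K'" "Max (M ` K') = M x" by blast
    then show "ereal (Max (M ` K')) < S" using MD K'(1) by auto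
    show "\<forall>y\<in>A \<inter> (\<Union>x\<in>K'. ball x (D x)). g y < Max (M ` K')"
    proof clarify
      fix y x assume "y \<in> A" "x \<in> K'" "y \<in> ball x (D x)"
      then have "g y < M x" using MD K'(1) by (auto simp: dist_commute)
      also have "M x \<le> Max (M ` K')" using K'(2) \<open>x \<in> K'\<close> by simp
      finally show "g y < Max (M ` K')" .
    qed
  qed (use K'(3) in blast)+
qed

lemma compact_neighbourhood_in_open:
  fixes K :: "'a::{real_normed_vector,heine_borel} set"
  assumes "compact K" "open U" "K \<subseteq> U"
  obtains C where "compact C" "K \<subseteq> interior C" "C \<subseteq> U"
proof -
  obtain \<epsilon> where "\<epsilon> > 0" and \<epsilon>: "(\<Union>x\<in>K. cball x \<epsilon>) \<subseteq> U"
    using compact_subset_open_imp_cball_epsilon_subset[OF assms] by blast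
  define C where "C = {x + y | x y. x \<in> K \<and> y \<in> cball 0 \<epsilon>}"
  have "compact C" unfolding C_def by (rule compact_sums[OF assms(1) compact_cball])
  moreover have "K \<subseteq> interior C"
  proof
    fix k assume "k \<in> K"
    have "ball k \<epsilon> \<subseteq> C"
    proof
      fix z assume "z \<in> ball k \<epsilon>"
      then have "z = k + (z - k)" "z - k \<in> cball 0 \<epsilon>"
        by (simp_all add: dist_norm norm_minus_commute)
      then show "z \<in> C" unfolding C_def using \<open>k \<in> K\<close> by blast
    qed
    then show "k \<in> interior C" using \<open>\<epsilon> > 0\<close> mem_interior by blast
  qed
  moreover have "C \<subseteq> U"
  proof
    fix z assume "z \<in> C"
    then obtain x y where "z = x + y" "x \<in> K" "y \<in> cball 0 \<epsilon>" unfolding C_def by blast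
    then have "z \<in> cball x \<epsilon>" by (simp add: dist_norm)
    then show "z \<in> U" using \<epsilon> \<open>x \<in> K\<close> by blast
  qed
  ultimately show ?thesis using that by blast
qed

lemma compact_subdomain_with_low_boundary:
  fixes \<Omega> :: "'a::euclidean_space set" and g :: "'a \<Rightarrow> real"
  assumes "open \<Omega>" "bounded \<Omega>" "\<Omega> \<noteq> {}"
    and "\<forall>z\<in>frontier \<Omega>. Limsup (at z within \<Omega>) (\<lambda>x. ereal (g x)) \<noteq> (SUP x\<in>\<Omega>. ereal (g x))"
  obtains C x0 m where "compact C" "C \<subseteq> \<Omega>" "x0 \<in> C" "m < g x0" "\<forall>x\<in>C - interior C. g x < m"
proof -
  define S where "S = (SUP x\<in>\<Omega>. ereal (g x))"
  have "Limsup (at z within \<Omega>) (\<lambda>x. ereal (g x)) \<le> S" for z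
  proof (rule Limsup_bounded)
    show "eventually (\<lambda>x. ereal (g x) \<le> S) (at z within \<Omega>)"
      unfolding eventually_at_filter S_def by (auto intro!: always_eventually SUP_upper)
  qed
  then have less: "\<forall>z\<in>frontier \<Omega>. Limsup (at z within \<Omega>) (\<lambda>x. ereal (g x)) < S"
    using assms(4) unfolding S_def using order_le_neq_trans by blast
  have "compact (frontier \<Omega>)" using compact_frontier_bounded[OF assms(2)] .
  moreover have "frontier \<Omega> \<noteq> {}"
    using frontier_not_empty[OF assms(3)] assms(2) not_bounded_UNIV by blast
  moreover have "frontier \<Omega> \<inter> \<Omega> = {}"
    using assms(1) by (auto simp: frontier_def interior_open)
  ultimately obtain m G where "ereal m < S" "open G" "frontier \<Omega> \<subseteq> G"
    and low: "\<forall>x\<in>\<Omega> \<inter> G. g x < m"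
    by (rule Limsup_less_imp_bound_near_compact[OF _ _ _ less])
  obtain x0 where "x0 \<in> \<Omega>" "m < g x0"
    using \<open>ereal m < S\<close> unfolding S_def less_SUP_iff by auto
  define K where "K = closure \<Omega> - G"
  have "compact K"
    unfolding K_def using \<open>open G\<close> bounded_closure[OF assms(2)]
    by (meson Diff_subset bounded_subset closed_Diff closed_closure compact_eq_bounded_closed)
  moreover have "K \<subseteq> \<Omega>"
    using closure_Un_frontier[of \<Omega>] \<open>frontier \<Omega> \<subseteq> G\<close> unfolding K_def by auto
  ultimately obtain C where C: "compact C" "K \<subseteq> interior C" "C \<subseteq> \<Omega>"
    using compact_neighbourhood_in_open assms(1) by blast
  have "x0 \<notin> G" using low \<open>x0 \<in> \<Omega>\<close> \<open>m < g x0\<close> by force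
  then have "x0 \<in> K" unfolding K_def using \<open>x0 \<in> \<Omega>\<close> closure_subset by blast
  then have "x0 \<in> C" using C(2) interior_subset by blast
  moreover have "g x < m" if "x \<in> C - interior C" for x
  proof -
    have "x \<in> \<Omega>" "x \<notin> K" using that C(2,3) by auto
    then have "x \<in> G" unfolding K_def using closure_subset by blast
    then show ?thesis using low \<open>x \<in> \<Omega>\<close> by blast
  qed
  ultimately show ?thesis using that C(1,3) \<open>m < g x0\<close> by blast
qed

lemma maximum_principle_under_open_perturbations:
  fixes p w :: "'a::topological_space \<Rightarrow> real \<times> real"
  assumes "compact C" "continuous_on C p" "continuous_on C w"
    and open_map: "\<And>t. t > 0 \<Longrightarrow>
      \<forall>y\<in>interior C. p y + t *\<^sub>R w y \<in> interior ((\<lambda>x. p x + t *\<^sub>R w x) ` C)"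
    and "continuous_on UNIV \<psi>" "quasi_convex \<psi>"
    and boundary: "\<forall>x\<in>C - interior C. \<psi> (p x) < m" and "x0 \<in> C"
  shows "\<psi> (p x0) \<le> m"
proof (rule ccontr)
  assume "\<not> \<psi> (p x0) \<le> m"
  define e where "e = (\<psi> (p x0) - m) / 2"
  have "e > 0" using \<open>\<not> \<psi> (p x0) \<le> m\<close> unfolding e_def by simp
  obtain t where "t > 0" and close: "\<forall>x\<in>C. \<bar>\<psi> (p x + t *\<^sub>R w x) - \<psi> (p x)\<bar> < e"
    using uniformly_small_perturbation[OF assms(5) compact_continuous_image[OF assms(2,1)]
        compact_imp_bounded[OF compact_continuous_image[OF assms(3,1)]] \<open>e > 0\<close>] .
  have "continuous_on C (\<lambda>x. p x + t *\<^sub>R w x)"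
    using assms(2,3) by (intro continuous_intros)
  then obtain y where "y \<in> C" "y \<notin> interior C" "\<psi> (p x0 + t *\<^sub>R w x0) \<le> \<psi> (p y + t *\<^sub>R w y)"
    using quasi_convex_maximum_principle[OF assms(1) _ open_map[OF \<open>t > 0\<close>] assms(5,6,8)] by blast
  moreover have "\<psi> (p y) < m" using boundary \<open>y \<in> C\<close> \<open>y \<notin> interior C\<close> by blast
  moreover have "\<bar>\<psi> (p y + t *\<^sub>R w y) - \<psi> (p y)\<bar> < e"
    and "\<bar>\<psi> (p x0 + t *\<^sub>R w x0) - \<psi> (p x0)\<bar> < e"
    using close \<open>y \<in> C\<close> \<open>x0 \<in> C\<close> by blast+
  moreover have "\<psi> (p x0) = m + 2 * e" unfolding e_def by (simp add: field_simps)
  ultimately show False by (simp add: abs_less_iff)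
qed

lemma open_mapping_perturbed_solution:
  fixes \<Omega> :: "(real \<times> real) set"
    and h \<alpha> \<alpha>x \<alpha>y \<beta> \<beta>x \<beta>y u ux uy v vx vy :: "real \<times> real \<Rightarrow> real"
  assumes "open \<Omega>"
    and "C1_with_partials \<Omega> \<alpha> \<alpha>x \<alpha>y" "C1_with_partials \<Omega> \<beta> \<beta>x \<beta>y"
    and "\<forall>p\<in>\<Omega>. \<bar>\<alpha>x p * \<beta>y p - \<alpha>y p * \<beta>x p\<bar> + \<bar>h p\<bar> > 0"
    and "\<forall>p\<in>\<Omega>. (\<alpha>x p * \<beta>y p - \<alpha>y p * \<beta>x p) * h p \<ge> 0"
    and "C1_with_partials \<Omega> u ux uy" "C1_with_partials \<Omega> v vx vy"
    and "\<forall>p\<in>\<Omega>. ux p * vy p - uy p * vx p = h p"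
    and "\<forall>p\<in>\<Omega>. \<beta>y p * ux p - \<beta>x p * uy p - \<alpha>y p * vx p + \<alpha>x p * vy p = 0"
    and "t \<noteq> 0" "T \<subseteq> \<Omega>" "y \<in> interior T"
  shows "(u y, v y) + t *\<^sub>R (\<alpha> y, \<beta> y) \<in> interior ((\<lambda>p. (u p, v p) + t *\<^sub>R (\<alpha> p, \<beta> p)) ` T)"
proof -
  have "\<forall>p\<in>\<Omega>.
      (ux p + t * \<alpha>x p) * (vy p + t * \<beta>y p) - (uy p + t * \<alpha>y p) * (vx p + t * \<beta>x p) \<noteq> 0"
  proof
    fix p assume "p \<in> \<Omega>"
    show "(ux p + t * \<alpha>x p) * (vy p + t * \<beta>y p) - (uy p + t * \<alpha>y p) * (vx p + t * \<beta>x p) \<noteq> 0"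
      by (rule perturbed_jacobian_nonzero) (use assms(4,5,8-10) \<open>p \<in> \<Omega>\<close> in auto)
  qed
  from open_mapping_nonzero_jacobian[OF assms(1) C1_with_partials_add_scaled[OF assms(6,2)]
      C1_with_partials_add_scaled[OF assms(7,3)] this assms(11,12)]
  have "(u y + t * \<alpha> y, v y + t * \<beta> y)
      \<in> interior ((\<lambda>p. (u p + t * \<alpha> p, v p + t * \<beta> p)) ` T)" .
  moreover have "(\<lambda>p. (u p, v p) + t *\<^sub>R (\<alpha> p, \<beta> p)) = (\<lambda>p. (u p + t * \<alpha> p, v p + t * \<beta> p))"
    by auto
  ultimately show ?thesis by simp
qed

theorem theorem4:
  fixes \<Omega> :: "(real \<times> real) set"
    and h \<alpha> \<alpha>x \<alpha>y \<beta> \<beta>x \<beta>y u ux uy v vx vy :: "real \<times> real \<Rightarrow> real"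
  assumes "open \<Omega>" and "bounded \<Omega>" and "\<Omega> \<noteq> {}"
    and "continuous_on \<Omega> h"
    and "C1_with_partials \<Omega> \<alpha> \<alpha>x \<alpha>y"
    and "C1_with_partials \<Omega> \<beta> \<beta>x \<beta>y"
    and "\<forall>p\<in>\<Omega>. \<bar>\<alpha>x p * \<beta>y p - \<alpha>y p * \<beta>x p\<bar> + \<bar>h p\<bar> > 0"
    and "\<forall>p\<in>\<Omega>. (\<alpha>x p * \<beta>y p - \<alpha>y p * \<beta>x p) * h p \<ge> 0"
    and "C1_with_partials \<Omega> u ux uy"
    and "C1_with_partials \<Omega> v vx vy"
    and "\<forall>p\<in>\<Omega>. ux p * vy p - uy p * vx p = h p"
    and "\<forall>p\<in>\<Omega>. \<beta>y p * ux p - \<beta>x p * uy p - \<alpha>y p * vx p + \<alpha>x p * vy p = 0"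
  shows "convex_hull_like \<Omega> (\<lambda>p. (u p, v p))"
  unfolding convex_hull_like_def
proof (intro allI impI)
  fix \<psi> :: "real \<times> real \<Rightarrow> real"
  assume \<psi>: "continuous_on UNIV \<psi> \<and> quasi_convex \<psi>"
  show "\<exists>z\<in>frontier \<Omega>. Limsup (at z within \<Omega>) (\<lambda>x. ereal (\<psi> (u x, v x)))
      = (SUP x\<in>\<Omega>. ereal (\<psi> (u x, v x)))"
  proof (rule ccontr)
    assume "\<not> ?thesis"
    then have "\<forall>z\<in>frontier \<Omega>. Limsup (at z within \<Omega>) (\<lambda>x. ereal (\<psi> (u x, v x)))
        \<noteq> (SUP x\<in>\<Omega>. ereal (\<psi> (u x, v x)))"
      by blast
    then obtain C x0 m where C: "compact C" "C \<subseteq> \<Omega>" "x0 \<in> C" "m < \<psi> (u x0, v x0)"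
        "\<forall>x\<in>C - interior C. \<psi> (u x, v x) < m"
      by (rule compact_subdomain_with_low_boundary[OF assms(1-3)])
    have uv: "continuous_on C (\<lambda>x. (u x, v x))"
      using continuous_on_subset[OF C1_with_partials_continuous_on[OF assms(9)] C(2)]
        continuous_on_subset[OF C1_with_partials_continuous_on[OF assms(10)] C(2)]
      by (rule continuous_on_Pair)
    have \<alpha>\<beta>: "continuous_on C (\<lambda>x. (\<alpha> x, \<beta> x))"
      using continuous_on_subset[OF C1_with_partials_continuous_on[OF assms(5)] C(2)]
        continuous_on_subset[OF C1_with_partials_continuous_on[OF assms(6)] C(2)]
      by (rule continuous_on_Pair)
    have open_map: "\<forall>y\<in>interior C. (u y, v y) + t *\<^sub>R (\<alpha> y, \<beta> y)
        \<in> interior ((\<lambda>x. (u x, v x) + t *\<^sub>R (\<alpha> x, \<beta> x)) ` C)" if "t > 0" for t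
      using open_mapping_perturbed_solution[OF assms(1) assms(5-12) _ C(2)] that by simp
    have "\<psi> (u x0, v x0) \<le> m"
      by (rule maximum_principle_under_open_perturbations[OF C(1) uv \<alpha>\<beta> open_map _ _ C(5,3)])
        (use \<psi> in auto)
    then show False using C(4) by simp
  qed
qed

end
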